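(* Let $0\leq\nu<\frac12$. Then for all $x>0$, \[ \Big(\frac{x}{x+\frac12-\nu}\Big)^{\nu+\frac12}<\sqrt{\frac{2x}{\pi}}\,\mathrm{e}^{x}K_\nu(x)<1 . \]
   Context: $K_\nu$ denotes the modified Bessel function of the second kind. *)

theory Defs
  imports "HOL-Analysis.Analysis"
begin

text \<open>Modified Bessel function of the second kind, via the standard integral
representation K_nu(x) = integral over t in [0,infinity) of exp(-x cosh t) cosh(nu t),
valid for x > 0 and all real nu.\<close>
definition besselK :: "real \<Rightarrow> real \<Rightarrow> real" where
  "besselK \<nu> x = (LINT t:{0..}|lborel. exp (- x * cosh t) * cosh (\<nu> * t))"

end

theory Submission
  imports Defs "HOL-Probability.Distributions" "HOL-Real_Asymp.Real_Asymp"
begin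

text \<open>
  For x > 0, K_\<nu>(x) is the integral over t > 0 of e^(-x cosh t) cosh(\<nu> t), and
  K_(1/2)(x) = sqrt(\<pi>/(2x)) e^(-x) is elementary; both bounds compare K_\<nu> with K_(1/2).
  The upper bound is the pointwise inequality cosh(\<nu> t) < cosh(t/2). For the lower bound,
  the decrease of ln cosh s / s^2 and the concavity of ln give
  cosh(\<nu> t) > cosh(t/2) A(t)^(-(\<nu>+1/2)) with A(t) = 2\<nu> + (1-2\<nu>) cosh t. Under the
  probability density proportional to e^(-x cosh t) cosh(t/2), cosh t has mean 1 + 1/(2x), so
  A has mean 1 + (1/2-\<nu>)/x, and Jensen's inequality for the convex map A \<mapsto> A^(-(\<nu>+1/2)),
  applied through its tangent line at the mean, gives the lower bound.
\<close>

lemma sinh_real_ge_self: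
  fixes s :: real
  assumes "0 \<le> s"
  shows "s \<le> sinh s"
proof -
  have "(\<lambda>u. sinh u - u) 0 \<le> (\<lambda>u. sinh u - u) s"
  proof (rule DERIV_nonneg_imp_nondecreasing[OF assms])
    fix u :: real
    show "\<exists>y. DERIV (\<lambda>u. sinh u - u) u :> y \<and> y \<ge> 0"
      using cosh_real_ge_1[of u] by (intro exI[of _ "cosh u - 1"]) (auto intro!: derivative_eq_intros)
  qed
  then show ?thesis by simp
qed

lemma mult_tanh_le_2_ln_cosh:
  fixes s :: real
  assumes "0 \<le> s"
  shows "s * tanh s \<le> 2 * ln (cosh s)"
proof -
  let ?p = "\<lambda>u::real. u * tanh u - 2 * ln (cosh u)"
  have "?p s \<le> ?p 0"
  proof (rule DERIV_nonpos_imp_nonincreasing[OF assms])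
    fix u :: real
    assume u: "0 \<le> u"
    have cosh_pos: "cosh u > 0"
      by (simp add: cosh_real_pos)
    have "DERIV ?p u :> tanh u + u * (1 - tanh u ^ 2) - 2 * (1 / cosh u * sinh u)"
      using cosh_pos by (auto intro!: derivative_eq_intros)
    also have "1 - tanh u ^ 2 = 1 / (cosh u)\<^sup>2"
      using cosh_pos by (simp add: tanh_def power_divide sinh_square_eq field_simps)
    also have "tanh u + u * (1 / (cosh u)\<^sup>2) - 2 * (1 / cosh u * sinh u)
             = (u - sinh u * cosh u) / (cosh u)\<^sup>2"
      using cosh_pos by (simp add: tanh_def field_simps power2_eq_square)
    finally have deriv: "DERIV ?p u :> (u - sinh u * cosh u) / (cosh u)\<^sup>2" .
    have "u \<le> sinh u * cosh u"
      using sinh_real_ge_self[OF u] u cosh_real_ge_1[of u]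
      by (smt (verit) mult_le_cancel_left1 sinh_real_nonneg_iff)
    with deriv show "\<exists>y. DERIV ?p u :> y \<and> y \<le> 0"
      by (intro exI[of _ "(u - sinh u * cosh u) / (cosh u)\<^sup>2"]) (simp add: divide_nonpos_pos)
  qed
  then show ?thesis by simp
qed

lemma ln_cosh_div_square_antimono:
  fixes s r :: real
  assumes "0 < s" "s \<le> r"
  shows "ln (cosh r) / r\<^sup>2 \<le> ln (cosh s) / s\<^sup>2"
proof (rule DERIV_nonpos_imp_nonincreasing[OF assms(2)])
  fix u :: real
  assume "s \<le> u"
  then have u: "u > 0" using assms by simp
  have cosh_pos: "cosh u > 0"
    by (simp add: cosh_real_pos)
  have "DERIV (\<lambda>u. ln (cosh u) / u\<^sup>2) u
          :> (1 / cosh u * sinh u * u\<^sup>2 - ln (cosh u) * (2 * u)) / (u\<^sup>2 * u\<^sup>2)"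
    using cosh_pos u by (auto intro!: derivative_eq_intros simp: power2_eq_square)
  also have "(1 / cosh u * sinh u * u\<^sup>2 - ln (cosh u) * (2 * u)) / (u\<^sup>2 * u\<^sup>2)
           = (u * tanh u - 2 * ln (cosh u)) / u ^ 3"
    using cosh_pos u by (simp add: tanh_def field_simps power2_eq_square power3_eq_cube)
  finally show "\<exists>y. DERIV (\<lambda>u. ln (cosh u) / u\<^sup>2) u :> y \<and> y \<le> 0"
    using u mult_tanh_le_2_ln_cosh[of u] by (auto intro!: divide_nonpos_pos)
qed

lemma ln_cosh_mult_ge:
  fixes c s :: real
  assumes "0 \<le> c" "c \<le> 1" "0 \<le> s"
  shows "c\<^sup>2 * ln (cosh s) \<le> ln (cosh (c * s))"
proof (cases "c = 0 \<or> s = 0")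
  case False
  then have "0 < c * s" and "c * s \<le> s"
    using assms mult_left_le_one_le[of s c] by auto
  then have "ln (cosh s) / s\<^sup>2 \<le> ln (cosh (c * s)) / (c * s)\<^sup>2"
    by (rule ln_cosh_div_square_antimono)
  then show ?thesis
    using False by (simp add: field_simps power_mult_distrib)
qed auto

lemma powr_tangent_le:
  fixes a b p :: real
  assumes "0 < a" "0 < b" "p \<le> 0"
  shows "b powr p + p * b powr (p - 1) * (a - b) \<le> a powr p"
proof -
  have "1 + p * (a / b - 1) \<le> 1 + p * ln (a / b)"
    using assms ln_le_minus_one[of "a / b"] by (simp add: mult_left_mono_neg)
  also have "\<dots> \<le> exp (p * ln (a / b))"
    by (rule exp_ge_add_one_self)
  finally have "b powr p * (1 + p * (a / b - 1)) \<le> b powr p * exp (p * ln (a / b))"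
    by (rule mult_left_mono) simp
  moreover have "b powr p * exp (p * ln (a / b)) = a powr p"
    using assms by (simp add: powr_def ln_div exp_add[symmetric] algebra_simps)
  moreover have "b powr p * (1 + p * (a / b - 1)) = b powr p + p * b powr (p - 1) * (a - b)"
    using assms by (simp add: powr_diff field_simps)
  ultimately show ?thesis by simp
qed

text \<open>The exponent \<nu> + 1/2 is chosen so that the two logarithmic estimates below
  combine with total weight 4\<nu>^2 + (2\<nu> + 1)(1 - 2\<nu>) = 1.\<close>

lemma cosh_half_mul_powr_less_cosh:
  fixes \<nu> t :: real
  assumes "0 \<le> \<nu>" "\<nu> < 1/2" "0 < t"
  shows "cosh (t/2) * (2*\<nu> + (1 - 2*\<nu>) * cosh t) powr (- (\<nu> + 1/2)) < cosh (\<nu> * t)"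
proof -
  define A where "A = 2*\<nu> + (1 - 2*\<nu>) * cosh t"
  define L where "L = ln (cosh (t/2))"
  have cosh_half: "cosh (t/2) > 1"
    using cosh_real_nonneg_less_iff[of 0 "t/2"] assms by simp
  have A_pos: "A > 0"
    using assms by (simp add: A_def add_nonneg_pos cosh_real_pos)
  have concavity: "(1 - 2*\<nu>) * ln (cosh t) \<le> ln A"
    using concave_onD[OF ln_concave, of "1 - 2*\<nu>" 1 "cosh t"] assms
    by (simp add: A_def cosh_real_pos)
  have doubling: "2 * L < ln (cosh t)"
  proof -
    have "(cosh (t/2))\<^sup>2 < cosh t"
      using cosh_double_cosh[of "t/2"] one_less_power[OF cosh_half, of 2] by simp
    then have "ln ((cosh (t/2))\<^sup>2) < ln (cosh t)"
      using cosh_half by (subst ln_less_cancel_iff) auto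
    then show ?thesis
      using cosh_half by (simp add: L_def ln_realpow)
  qed
  have scaling: "(2*\<nu>)\<^sup>2 * L \<le> ln (cosh (\<nu> * t))"
    using ln_cosh_mult_ge[of "2*\<nu>" "t/2"] assms by (simp add: L_def)
  have weight_pos: "(\<nu> + 1/2) * (1 - 2*\<nu>) > 0"
    using assms by simp
  have "L = (2*\<nu>)\<^sup>2 * L + (\<nu> + 1/2) * (1 - 2*\<nu>) * (2 * L)"
    by (simp add: algebra_simps power2_eq_square)
  also have "\<dots> < ln (cosh (\<nu> * t)) + (\<nu> + 1/2) * (1 - 2*\<nu>) * ln (cosh t)"
    using scaling doubling weight_pos by (intro add_le_less_mono mult_strict_left_mono)
  also have "\<dots> \<le> ln (cosh (\<nu> * t)) + (\<nu> + 1/2) * ln A"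
    using concavity assms by (simp add: mult.assoc mult_left_mono)
  finally have "L < ln (cosh (\<nu> * t)) + (\<nu> + 1/2) * ln A" .
  moreover have "ln (cosh (t/2) * A powr (- (\<nu> + 1/2))) = L - (\<nu> + 1/2) * ln A"
    using A_pos cosh_half by (simp add: L_def ln_mult ln_powr algebra_simps)
  ultimately have "ln (cosh (t/2) * A powr (- (\<nu> + 1/2))) < ln (cosh (\<nu> * t))"
    by linarith
  then show ?thesis
    using A_pos cosh_half by (subst (asm) ln_less_cancel_iff) (auto simp: A_def cosh_real_pos)
qed

lemma cosh_half_mul_tangent_less_cosh:
  fixes \<nu> t a :: real
  assumes nu: "0 \<le> \<nu>" "\<nu> < 1/2" and t: "0 < t" and a: "0 < a"
  defines "p \<equiv> - (\<nu> + 1/2)"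
  shows "cosh (t/2) * (a powr p + p * a powr (p - 1) * (2*\<nu> + (1 - 2*\<nu>) * cosh t - a))
         < cosh (\<nu> * t)"
proof -
  define A where "A = 2*\<nu> + (1 - 2*\<nu>) * cosh t"
  have "A > 0"
    using nu by (simp add: A_def add_nonneg_pos cosh_real_pos)
  then have "a powr p + p * a powr (p - 1) * (A - a) \<le> A powr p"
    using powr_tangent_le[of A a p] a nu by (simp add: p_def)
  then have "cosh (t/2) * (a powr p + p * a powr (p - 1) * (A - a)) \<le> cosh (t/2) * A powr p"
    by (simp add: cosh_real_pos)
  also have "\<dots> < cosh (\<nu> * t)"
    using cosh_half_mul_powr_less_cosh[OF nu t] by (simp add: A_def p_def)
  finally show ?thesis
    by (simp add: A_def)
qed

lemma set_integral_pos:
  fixes f :: "'a \<Rightarrow> real"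
  assumes f: "set_integrable M A f" and A: "A \<in> sets M" "emeasure M A > 0"
    and pos: "\<And>x. x \<in> A \<Longrightarrow> 0 < f x"
  shows "0 < (LINT x:A|M. f x)"
proof -
  let ?g = "\<lambda>x. indicator A x *\<^sub>R f x"
  have g: "integrable M ?g"
    using f by (simp add: set_integrable_def)
  have g_nonneg: "AE x in M. 0 \<le> ?g x"
    using pos by (auto simp: indicator_def less_imp_le)
  have "(LINT x:A|M. f x) \<noteq> 0"
  proof
    assume "(LINT x:A|M. f x) = 0"
    then have "AE x in M. ?g x = 0"
      using integral_nonneg_eq_0_iff_AE[OF g g_nonneg] by (simp add: set_lebesgue_integral_def)
    then have "AE x in M. x \<notin> A"
      by eventually_elim (use pos in \<open>fastforce simp: indicator_def\<close>)
    then have "A \<in> null_sets M"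
      using AE_iff_null_sets[OF A(1)] by simp
    with A(2) show False
      by auto
  qed
  moreover have "0 \<le> (LINT x:A|M. f x)"
    using g_nonneg by (simp add: set_lebesgue_integral_def integral_nonneg_AE)
  ultimately show ?thesis
    by linarith
qed

lemma set_integral_strict_mono:
  fixes f g :: "'a \<Rightarrow> real"
  assumes "set_integrable M A f" "set_integrable M A g" "A \<in> sets M" "emeasure M A > 0"
    and "\<And>x. x \<in> A \<Longrightarrow> f x < g x"
  shows "(LINT x:A|M. f x) < (LINT x:A|M. g x)"
proof -
  have "0 < (LINT x:A|M. g x - f x)"
    using assms by (intro set_integral_pos set_integral_diff) auto
  then show ?thesis
    using assms by (simp add: set_integral_diff)
qed

lemma gaussian_integral_Ioi:
  shows "set_integrable lborel {0<..} (\<lambda>s::real. exp (- s\<^sup>2))"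
    and "(LINT s:{0<..}|lborel. exp (- s\<^sup>2)) = sqrt pi / 2"
proof -
  have "has_bochner_integral lborel (\<lambda>s. indicator {0..} s *\<^sub>R exp (- s\<^sup>2)) (sqrt pi / 2)"
    by (rule gaussian_moment_0)
  then have int: "set_integrable lborel {0..} (\<lambda>s::real. exp (- s\<^sup>2))"
    and val: "(LINT s:{0..}|lborel. exp (- s\<^sup>2)) = sqrt pi / 2"
    by (simp_all add: set_integrable_def set_lebesgue_integral_def has_bochner_integral_iff)
  show "set_integrable lborel {0<..} (\<lambda>s::real. exp (- s\<^sup>2))"
    using int by (subst set_integrable_discrete_difference[where X="{0}" and B="{0..}"]) auto
  show "(LINT s:{0<..}|lborel. exp (- s\<^sup>2)) = sqrt pi / 2"
    using val by (subst set_integral_discrete_difference[where X="{0}" and B="{0..}"]) auto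
qed

text \<open>The substitution t = 2 arsinh (s / sqrt(2x)) turns e^(-x cosh t) cosh(t/2) dt into
  (2 / sqrt(2x)) e^(-x) e^(-s^2) ds.\<close>

lemma exp_cosh_arsinh_substitution:
  fixes c s x :: real
  assumes c: "c > 0" "c\<^sup>2 = 2*x"
  shows "exp (- x * cosh (2 * arsinh (s/c))) * cosh (2 * arsinh (s/c) / 2)
           * (2 / (c * sqrt ((s/c)\<^sup>2 + 1)))
         = 2 / c * exp (- x) * exp (- s\<^sup>2)"
proof -
  have root_pos: "sqrt ((s/c)\<^sup>2 + 1) > 0"
    by (simp add: add_nonneg_pos)
  have cosh_double: "cosh (2 * arsinh (s/c)) = 1 + 2 * (s/c)\<^sup>2"
    unfolding cosh_double_cosh cosh_arsinh_real by simp
  have cosh_single: "cosh (2 * arsinh (s/c) / 2) = sqrt ((s/c)\<^sup>2 + 1)"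
    by (simp add: cosh_arsinh_real)
  have "x > 0"
    using c zero_less_power[OF c(1), of 2] by simp
  then have exponent: "- x * (1 + 2 * (s/c)\<^sup>2) = -x + - s\<^sup>2"
    using c by (simp add: field_simps power2_eq_square)
  show ?thesis
    unfolding cosh_double cosh_single exponent exp_add
    using root_pos c by (simp add: field_simps)
qed

lemma tendsto_two_arsinh_div_ereal:
  fixes c :: real
  assumes c: "c > 0"
  shows "((ereal \<circ> (\<lambda>s. 2 * arsinh (s / c)) \<circ> real_of_ereal) \<longlongrightarrow> 0) (at_right 0)"
    and "((ereal \<circ> (\<lambda>s. 2 * arsinh (s / c)) \<circ> real_of_ereal) \<longlongrightarrow> \<infinity>) (at_left \<infinity>)"
proof -
  show "((ereal \<circ> (\<lambda>s. 2 * arsinh (s / c)) \<circ> real_of_ereal) \<longlongrightarrow> 0) (at_right 0)"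
    using c by (auto simp: zero_ereal_def ereal_tendsto_simps intro!: tendsto_eq_intros)
  have "filterlim (\<lambda>s. s / c) at_top at_top"
    using c by real_asymp
  then have "filterlim (\<lambda>s. 2 * arsinh (s / c)) at_top at_top"
    by (intro filterlim_tendsto_pos_mult_at_top[OF tendsto_const]
              filterlim_compose[OF arsinh_real_at_top]) auto
  then show "((ereal \<circ> (\<lambda>s. 2 * arsinh (s / c)) \<circ> real_of_ereal) \<longlongrightarrow> \<infinity>) (at_left \<infinity>)"
    unfolding ereal_tendsto_simps by (simp add: comp_def)
qed

lemma exp_cosh_mult_cosh_half_Ioi:
  fixes x :: real
  assumes x: "x > 0"
  shows "set_integrable lborel {0<..} (\<lambda>t. exp (- x * cosh t) * cosh (t/2))"
    and "(LINT t:{0<..}|lborel. exp (- x * cosh t) * cosh (t/2)) = sqrt (pi / (2*x)) * exp (- x)"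
proof -
  define c where "c = sqrt (2*x)"
  have c: "c > 0" "c\<^sup>2 = 2*x"
    using x by (simp_all add: c_def)
  define f where "f t = exp (- x * cosh t) * cosh (t/2)" for t
  define g where "g s = 2 * arsinh (s / c)" for s
  define g' where "g' s = 2 / (c * sqrt ((s/c)\<^sup>2 + 1))" for s
  have root_pos: "sqrt ((s/c)\<^sup>2 + 1) > 0" for s
    by (simp add: add_nonneg_pos)
  have substituted: "f (g s) * g' s = (2 / c * exp (-x)) * exp (- s\<^sup>2)" for s
    unfolding f_def g_def g'_def by (rule exp_cosh_arsinh_substitution[OF c])
  have g_deriv: "DERIV g s :> g' s" for s
  proof -
    have "((\<lambda>s. arsinh (s/c)) has_real_derivative 1 / sqrt ((s/c)\<^sup>2 + 1) * (1/c)) (at s)"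
      using c by (intro DERIV_chain2[OF arsinh_real_has_field_derivative]) (auto intro!: derivative_eq_intros)
    from DERIV_cmult[OF this, of 2] show ?thesis
      unfolding g_def g'_def using c by (simp add: field_simps)
  qed
  have g_0: "((ereal \<circ> g \<circ> real_of_ereal) \<longlongrightarrow> 0) (at_right 0)"
    and g_infinity: "((ereal \<circ> g \<circ> real_of_ereal) \<longlongrightarrow> \<infinity>) (at_left \<infinity>)"
    unfolding g_def[abs_def] using tendsto_two_arsinh_div_ereal[OF c(1)] by auto
  have gaussian: "set_integrable lborel (einterval 0 \<infinity>) (\<lambda>s. f (g s) * g' s)"
    unfolding substituted using gaussian_integral_Ioi(1) by (simp add: zero_ereal_def)
  note substitution = interval_integral_substitution_nonneg[OF _ g_deriv _ _ _ _ g_0 g_infinity gaussian]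
  have conditions: "g' s \<ge> 0" "isCont g' s" "f (g s) \<ge> 0" "isCont f (g s)" for s
    using c root_pos[of s] unfolding f_def[abs_def] g'_def[abs_def]
    by (auto intro!: continuous_intros)
  have f_int: "set_integrable lborel (einterval 0 \<infinity>) f"
    and f_eq: "(LBINT t=0..\<infinity>. f t) = (LBINT s=0..\<infinity>. f (g s) * g' s)"
    using substitution conditions by (auto simp: zero_ereal_def)
  show "set_integrable lborel {0<..} (\<lambda>t. exp (- x * cosh t) * cosh (t/2))"
    using f_int by (simp add: zero_ereal_def f_def[abs_def])
  have "(LINT t:{0<..}|lborel. exp (- x * cosh t) * cosh (t/2)) = (LBINT t=0..\<infinity>. f t)"
    unfolding f_def zero_ereal_def interval_integral_to_infinity_eq ..
  also have "\<dots> = (LBINT s=0..\<infinity>. f (g s) * g' s)"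
    by (rule f_eq)
  also have "\<dots> = (2 / c * exp (-x)) * (sqrt pi / 2)"
    by (simp add: substituted zero_ereal_def interval_integral_to_infinity_eq gaussian_integral_Ioi(2))
  also have "\<dots> = sqrt (pi / (2*x)) * exp (- x)"
    using x by (simp add: c_def real_sqrt_divide)
  finally show "(LINT t:{0<..}|lborel. exp (- x * cosh t) * cosh (t/2)) = sqrt (pi / (2*x)) * exp (- x)" .
qed

lemma emeasure_lborel_Ioi_pos: "0 < emeasure lborel {a::real<..}"
proof -
  have "emeasure lborel {a<..<a + 1} \<le> emeasure lborel {a<..}"
    by (rule emeasure_mono) auto
  moreover have "0 < emeasure lborel {a<..<a + 1}"
    by simp
  ultimately show ?thesis
    by (metis order.strict_trans2)
qed

lemma set_borel_measurable_continuous_on: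
  fixes f :: "'a::euclidean_space \<Rightarrow> 'b::real_normed_vector"
  assumes "A \<in> sets borel" "continuous_on A f"
  shows "set_borel_measurable lborel A f"
  using set_measurable_continuous_on[OF assms] by (simp add: set_borel_measurable_def)

lemma set_integrable_exp_cosh_mult_cosh:
  fixes x \<nu> :: real
  assumes "x > 0" "0 \<le> \<nu>" "\<nu> \<le> 1/2"
  shows "set_integrable lborel {0<..} (\<lambda>t. exp (- x * cosh t) * cosh (\<nu> * t))"
proof (rule set_integrable_bound[OF exp_cosh_mult_cosh_half_Ioi(1)[OF assms(1)]])
  show "set_borel_measurable lborel {0<..} (\<lambda>t. exp (- x * cosh t) * cosh (\<nu> * t))"
    by (intro set_borel_measurable_continuous_on continuous_intros) auto
  have "cosh (\<nu> * t) \<le> cosh (t/2)" if "t > 0" for t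
    using that assms mult_right_mono[of \<nu> "1/2" t] by (simp add: cosh_real_nonneg_le_iff)
  then show "AE t in lborel. t \<in> {0<..} \<longrightarrow>
      norm (exp (- x * cosh t) * cosh (\<nu> * t)) \<le> norm (exp (- x * cosh t) * cosh (t/2))"
    by (simp add: abs_mult)
qed

lemma set_integrable_exp_cosh_mult_cosh_half_cosh:
  fixes x :: real
  assumes x: "x > 0"
  shows "set_integrable lborel {0<..} (\<lambda>t. exp (- x * cosh t) * cosh (t/2) * cosh t)"
proof (rule set_integrable_bound)
  show "set_integrable lborel {0<..} (\<lambda>t. 2/x * (exp (- (x/2) * cosh t) * cosh (t/2)))"
    using exp_cosh_mult_cosh_half_Ioi(1)[of "x/2"] x by simp
  show "set_borel_measurable lborel {0<..} (\<lambda>t. exp (- x * cosh t) * cosh (t/2) * cosh t)"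
    by (intro set_borel_measurable_continuous_on continuous_intros) auto
  have bound: "y * exp (- x * y) \<le> 2/x * exp (- (x/2) * y)" for y
  proof -
    have "y \<le> 2/x * exp (x/2 * y)"
      using exp_ge_add_one_self[of "x/2 * y"] x by (simp add: field_simps)
    then have "y * exp (- x * y) \<le> 2/x * exp (x/2 * y) * exp (- x * y)"
      by (rule mult_right_mono) simp
    also have "\<dots> = 2/x * exp (- (x/2) * y)"
      by (simp add: mult.assoc flip: exp_add)
    finally show ?thesis .
  qed
  have "exp (- x * cosh t) * cosh (t/2) * cosh t \<le> 2/x * (exp (- (x/2) * cosh t) * cosh (t/2))" for t
    using mult_right_mono[OF bound[of "cosh t"] cosh_real_nonneg[of "t/2"]] by (simp add: mult_ac)
  then show "AE t in lborel. t \<in> {0<..} \<longrightarrow> norm (exp (- x * cosh t) * cosh (t/2) * cosh t)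
      \<le> norm (2/x * (exp (- (x/2) * cosh t) * cosh (t/2)))"
    using x by (simp add: abs_mult abs_of_nonneg)
qed

lemma has_real_derivative_exp_cosh_mult_sinh_half:
  fixes x t :: real
  assumes x: "x \<noteq> 0"
  shows "((\<lambda>t. - (exp (- x * cosh t) * sinh (t/2)) / x) has_real_derivative
           exp (- x * cosh t) * cosh (t/2) * (cosh t - 1 - 1/(2*x))) (at t)"
proof -
  have sinh_sinh_half: "sinh t * sinh (t/2) = (cosh t - 1) * cosh (t/2)"
    using sinh_double[of "t/2"] cosh_double[of "t/2"] cosh_square_eq[of "t/2"]
    by (simp add: power2_eq_square algebra_simps)
  have "((\<lambda>t. - (exp (- x * cosh t) * sinh (t/2)) / x) has_real_derivative
           - ((exp (- x * cosh t) * (- x * sinh t)) * sinh (t/2)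
              + exp (- x * cosh t) * (cosh (t/2) / 2)) / x) (at t)"
    using x by (auto intro!: derivative_eq_intros) (simp_all add: field_simps)
  also have "- ((exp (- x * cosh t) * (- x * sinh t)) * sinh (t/2)
               + exp (- x * cosh t) * (cosh (t/2) / 2)) / x
      = exp (- x * cosh t) * (sinh t * sinh (t/2)) - exp (- x * cosh t) * cosh (t/2) / (2*x)"
    using x by (simp add: field_simps)
  also have "\<dots> = exp (- x * cosh t) * cosh (t/2) * (cosh t - 1 - 1/(2*x))"
    unfolding sinh_sinh_half using x by (simp add: field_simps)
  finally show ?thesis .
qed

text \<open>Under the weight e^(-x cosh t) cosh(t/2), cosh t has mean 1 + 1/(2x): the centred
  integrand has the antiderivative -e^(-x cosh t) sinh(t/2) / x, which vanishes at both ends.\<close>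

lemma exp_cosh_mult_cosh_half_centred_moment:
  fixes x :: real
  assumes x: "x > 0"
  shows "set_integrable lborel {0<..} (\<lambda>t. exp (- x * cosh t) * cosh (t/2) * (cosh t - 1 - 1/(2*x)))"
    and "(LINT t:{0<..}|lborel. exp (- x * cosh t) * cosh (t/2) * (cosh t - 1 - 1/(2*x))) = 0"
proof -
  let ?f = "\<lambda>t. exp (- x * cosh t) * cosh (t/2) * (cosh t - 1 - 1/(2*x))"
  have split: "?f t = exp (- x * cosh t) * cosh (t/2) * cosh t
      - (1 + 1/(2*x)) * (exp (- x * cosh t) * cosh (t/2))" for t
    by (simp add: algebra_simps)
  show f_int: "set_integrable lborel {0<..} ?f"
    unfolding split
    using set_integrable_exp_cosh_mult_cosh_half_cosh[OF x] exp_cosh_mult_cosh_half_Ioi(1)[OF x]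
    by (intro set_integral_diff(1) set_integrable_mult_right)
  define F where "F = (\<lambda>t. - (exp (- x * cosh t) * sinh (t/2)) / x)"
  have F_deriv: "(F has_real_derivative ?f t) (at t)" for t
    unfolding F_def using x by (intro has_real_derivative_exp_cosh_mult_sinh_half) simp
  have F_0: "((F \<circ> real_of_ereal) \<longlongrightarrow> 0) (at_right 0)"
  proof -
    have "(F \<longlongrightarrow> F 0) (at_right 0)"
      unfolding F_def using x by (intro tendsto_intros) auto
    then show ?thesis
      by (simp add: F_def zero_ereal_def ereal_tendsto_simps)
  qed
  have F_infinity: "((F \<circ> real_of_ereal) \<longlongrightarrow> 0) (at_left \<infinity>)"
  proof -
    have "(F \<longlongrightarrow> 0) at_top"
      unfolding F_def using x by real_asymp
    then show ?thesis
      by (simp add: ereal_tendsto_simps)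
  qed
  have "(LBINT t=0..\<infinity>. ?f t) = 0 - 0"
    by (rule interval_integral_FTC_integrable[where F=F])
       (use f_int F_deriv F_0 F_infinity in \<open>auto simp: zero_ereal_def
          has_real_derivative_iff_has_vector_derivative[symmetric] intro!: continuous_intros\<close>)
  then show "(LINT t:{0<..}|lborel. ?f t) = 0"
    by (simp add: zero_ereal_def interval_integral_to_infinity_eq)
qed

lemma besselK_eq_set_integral_Ioi:
  "besselK \<nu> x = (LINT t:{0<..}|lborel. exp (- x * cosh t) * cosh (\<nu> * t))"
  unfolding besselK_def by (rule set_integral_discrete_difference[where X="{0}"]) auto

lemma besselK_half:
  assumes "x > 0"
  shows "besselK (1/2) x = sqrt (pi / (2*x)) * exp (- x)"
  using exp_cosh_mult_cosh_half_Ioi(2)[OF assms] by (simp add: besselK_eq_set_integral_Ioi)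

lemma besselK_less_besselK_half:
  fixes \<nu> x :: real
  assumes "0 \<le> \<nu>" "\<nu> < 1/2" "x > 0"
  shows "besselK \<nu> x < besselK (1/2) x"
  unfolding besselK_eq_set_integral_Ioi
proof (rule set_integral_strict_mono)
  show "set_integrable lborel {0<..} (\<lambda>t. exp (- x * cosh t) * cosh (\<nu> * t))"
    and "set_integrable lborel {0<..} (\<lambda>t. exp (- x * cosh t) * cosh (1/2 * t))"
    using assms set_integrable_exp_cosh_mult_cosh[of x \<nu>] exp_cosh_mult_cosh_half_Ioi(1)[of x]
    by simp_all
  fix t :: real
  assume "t \<in> {0<..}"
  then have "cosh (\<nu> * t) < cosh (1/2 * t)"
    using assms mult_strict_right_mono[of \<nu> "1/2" t] by (simp add: cosh_real_nonneg_less_iff)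
  then show "exp (- x * cosh t) * cosh (\<nu> * t) < exp (- x * cosh t) * cosh (1/2 * t)"
    by simp
qed (auto simp: emeasure_lborel_Ioi_pos)

lemma besselK_gt_scaled_besselK_half:
  fixes \<nu> x :: real
  assumes nu: "0 \<le> \<nu>" "\<nu> < 1/2" and x: "x > 0"
  shows "(1 + (1/2 - \<nu>) / x) powr (- (\<nu> + 1/2)) * besselK (1/2) x < besselK \<nu> x"
proof -
  define a where "a = 1 + (1/2 - \<nu>) / x"
  define p where "p = - (\<nu> + 1/2)"
  define k where "k = p * a powr (p - 1) * (1 - 2*\<nu>)"
  define w where "w t = exp (- x * cosh t) * cosh (t/2)" for t
  define d where "d t = cosh t - 1 - 1/(2*x)" for t
  have a_pos: "a > 0"
    using nu x by (simp add: a_def add_pos_nonneg)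
  have w_int: "set_integrable lborel {0<..} w"
    and w_val: "(LINT t:{0<..}|lborel. w t) = besselK (1/2) x"
    using exp_cosh_mult_cosh_half_Ioi[OF x] besselK_half[OF x] by (simp_all add: w_def[abs_def])
  have wd_int: "set_integrable lborel {0<..} (\<lambda>t. w t * d t)"
    and wd_val: "(LINT t:{0<..}|lborel. w t * d t) = 0"
    using exp_cosh_mult_cosh_half_centred_moment[OF x] by (simp_all add: w_def d_def mult.assoc)
  have tangent_below: "a powr p * w t + k * (w t * d t) < exp (- x * cosh t) * cosh (\<nu> * t)"
    if t: "t > 0" for t
  proof -
    have "2*\<nu> + (1 - 2*\<nu>) * cosh t - a = (1 - 2*\<nu>) * d t"
      using x by (simp add: a_def d_def field_simps)
    then have "cosh (t/2) * (a powr p + k * d t) < cosh (\<nu> * t)"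
      using cosh_half_mul_tangent_less_cosh[OF nu t a_pos] by (simp add: k_def p_def mult_ac)
    then have "exp (- x * cosh t) * (cosh (t/2) * (a powr p + k * d t))
        < exp (- x * cosh t) * cosh (\<nu> * t)"
      by simp
    then show ?thesis
      by (simp add: w_def algebra_simps)
  qed
  have "a powr p * besselK (1/2) x = (LINT t:{0<..}|lborel. a powr p * w t + k * (w t * d t))"
    using w_int wd_int
    by (simp add: set_integral_add set_integrable_mult_right w_val wd_val)
  also have "\<dots> < besselK \<nu> x"
    unfolding besselK_eq_set_integral_Ioi
    using w_int wd_int tangent_below nu x
    by (intro set_integral_strict_mono set_integral_add set_integrable_mult_right
          set_integrable_exp_cosh_mult_cosh) (auto simp: emeasure_lborel_Ioi_pos)
  finally show ?thesis
    by (simp add: a_def p_def)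
qed

theorem corollary2p2:
  fixes \<nu> x :: real
  assumes "0 \<le> \<nu>" and "\<nu> < 1/2" and "x > 0"
  shows "(x / (x + 1/2 - \<nu>)) powr (\<nu> + 1/2) < sqrt (2 * x / pi) * exp x * besselK \<nu> x
       \<and> sqrt (2 * x / pi) * exp x * besselK \<nu> x < 1"
proof -
  define P where "P = sqrt (2 * x / pi) * exp x"
  have "P > 0"
    using assms by (simp add: P_def)
  have normalised: "P * besselK (1/2) x = 1"
    using assms by (simp add: P_def besselK_half real_sqrt_divide exp_minus field_simps)
  have "x / (x + 1/2 - \<nu>) = inverse (1 + (1/2 - \<nu>) / x)"
    using assms by (simp add: field_simps)
  then have "(x / (x + 1/2 - \<nu>)) powr (\<nu> + 1/2) = inverse ((1 + (1/2 - \<nu>) / x) powr (\<nu> + 1/2))"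
    using assms by (simp add: inverse_powr)
  also have "\<dots> = (1 + (1/2 - \<nu>) / x) powr (- (\<nu> + 1/2))"
    by (rule powr_minus[symmetric])
  also have "\<dots> = P * ((1 + (1/2 - \<nu>) / x) powr (- (\<nu> + 1/2)) * besselK (1/2) x)"
    using normalised by (simp add: algebra_simps)
  also have "\<dots> < P * besselK \<nu> x"
    using besselK_gt_scaled_besselK_half[OF assms] \<open>P > 0\<close> by simp
  finally have lower: "(x / (x + 1/2 - \<nu>)) powr (\<nu> + 1/2) < P * besselK \<nu> x" .
  have "P * besselK \<nu> x < P * besselK (1/2) x"
    using besselK_less_besselK_half[OF assms] \<open>P > 0\<close> by simp
  with lower normalised show ?thesis
    by (simp add: P_def)
qed

end
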